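(* Let $R$ be a ring such that every ideal generated by a strong parameter sequence on $R$ is unmixed. Then $R$ is Cohen-Macaulay.
   Context: All rings are commutative with identity. For an $R$-module $M$, a prime $P$ is weakly associated to $M$ if $P$ is minimal over $(0:_Rz)$ for some $z\in M$; $\operatorname{wAss}_R M$ is the set of such primes, and $\operatorname{Min}_R M$ denotes the set of minimal primes of the support of $M$. An ideal $I$ is unmixed if $\operatorname{wAss}_R R/I=\operatorname{Min}_R R/I$. For $x\in R$ let $C(x)$ be the complex $0\to R\to R_x\to 0$ ($R$ in degree $0$, natural localization map); for a finite sequence $\mathbf x=x_1,\dots,x_\ell$ put $C(\mathbf x)=C(x_1)\otimes_R\cdots\otimes_R C(x_\ell)$ and let $H^i_{\mathbf x}(M)$ be the $i$th cohomology of $C(\mathbf x)\otimes_R M$; $\ell(\mathbf x)=\ell$. Let $K(x)$ be $0\to R\xrightarrow{x}R\to 0$ (degrees $1,0$), $K(\mathbf x)=K(x_1)\otimes\cdots\otimes K(x_\ell)$, $H_i(\mathbf x)$ its homology. For $m\ge n$ the chain map $K(\mathbf x^m)\to K(\mathbf x^n)$ ($\mathbf x^m=x_1^m,\dots,x_\ell^m$) is the tensor product of the maps $K(x_i^m)\to K(x_i^n)$ given by multiplication by $x_i^{m-n}$ in degree $1$ and identity in degree $0$. $\mathbf x$ is weakly proregular if for every $n$ there is $m\ge n$ with $H_i(\mathbf x^m)\to H_i(\mathbf x^n)$ zero for all $i\ge1$. $\mathbf x$ is a parameter sequence on $R$ if it is weakly proregular, $(\mathbf x)R\neq R$, and $H^{\ell(\mathbf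 x)}_{\mathbf x}(R)_p\neq0$ for every prime $p\supseteq(\mathbf x)R$ (the empty sequence, generating the zero ideal, is a parameter sequence). It is a strong parameter sequence if $x_1,\dots,x_i$ is a parameter sequence for each $i=1,\dots,\ell(\mathbf x)$. A regular sequence on $M$: each $x_i$ is a non-zero-divisor on $M/(x_1,\dots,x_{i-1})M$ and $M\neq(\mathbf x)M$. A ring $R$ is Cohen-Macaulay if every strong parameter sequence on $R$ is a regular sequence on $R$. *)

theory Defs
  imports Main
begin

definition cr_ideal :: "'a::comm_ring_1 set \<Rightarrow> bool" where
  "cr_ideal I \<longleftrightarrow> 0 \<in> I \<and> (\<forall>x\<in>I. \<forall>y\<in>I. x + y \<in> I) \<and> (\<forall>r. \<forall>x\<in>I. r * x \<in> I)"

definition cr_prime_ideal :: "'a::comm_ring_1 set \<Rightarrow> bool" where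
  "cr_prime_ideal P \<longleftrightarrow> cr_ideal P \<and> P \<noteq> UNIV \<and> (\<forall>a b. a * b \<in> P \<longrightarrow> a \<in> P \<or> b \<in> P)"

definition ideal_gen :: "'a::comm_ring_1 list \<Rightarrow> 'a set" where
  "ideal_gen xs = {y. \<exists>c. y = (\<Sum>i<length xs. c i * xs ! i)}"

definition minimal_prime_over :: "'a::comm_ring_1 set \<Rightarrow> 'a set \<Rightarrow> bool" where
  "minimal_prime_over P J \<longleftrightarrow> cr_prime_ideal P \<and> J \<subseteq> P \<and>
     (\<forall>Q. cr_prime_ideal Q \<and> J \<subseteq> Q \<and> Q \<subseteq> P \<longrightarrow> Q = P)"

text \<open>Annihilator (0 :_R z) of the element z + I of R/I.\<close>
definition ann_quot :: "'a::comm_ring_1 set \<Rightarrow> 'a \<Rightarrow> 'a set" where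
  "ann_quot I z = {r. r * z \<in> I}"

definition wAss_quot :: "'a::comm_ring_1 set \<Rightarrow> 'a set set" where
  "wAss_quot I = {P. \<exists>z. minimal_prime_over P (ann_quot I z)}"

text \<open>Support of R/I: primes p with (R/I)_p nonzero, i.e. some element z + I
  is not killed by any s outside p.\<close>
definition Supp_quot :: "'a::comm_ring_1 set \<Rightarrow> 'a set set" where
  "Supp_quot I = {P. cr_prime_ideal P \<and> (\<exists>z. \<forall>s. s \<notin> P \<longrightarrow> s * z \<notin> I)}"

definition Min_quot :: "'a::comm_ring_1 set \<Rightarrow> 'a set set" where
  "Min_quot I = {P. P \<in> Supp_quot I \<and> (\<forall>Q\<in>Supp_quot I. Q \<subseteq> P \<longrightarrow> Q = P)}"

definition unmixed :: "'a::comm_ring_1 set \<Rightarrow> bool" where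
  "unmixed I \<longleftrightarrow> wAss_quot I = Min_quot I"

text \<open>K_i(x) is free on the i-element subsets S of {0..<l}; a chain is a coefficient
  function on index sets. Basis e_S = e_{j1} (x) ... (x) e_{ji}, j1 < ... < ji.\<close>
definition kchain :: "nat \<Rightarrow> nat \<Rightarrow> (nat set \<Rightarrow> 'a::comm_ring_1) \<Rightarrow> bool" where
  "kchain l i c \<longleftrightarrow> (\<forall>S. c S \<noteq> 0 \<longrightarrow> S \<subseteq> {..<l} \<and> card S = i)"

text \<open>Differential: d(e_T) = sum over j in T of (-1)^#{k in T. k<j} x_j e_(T - {j}).\<close>
definition koszul_d :: "'a::comm_ring_1 list \<Rightarrow> (nat set \<Rightarrow> 'a) \<Rightarrow> nat set \<Rightarrow> 'a" where
  "koszul_d xs c S = (if S \<subseteq> {..<length xs} then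
     (\<Sum>j\<in>{..<length xs} - S. (-1) ^ card {k\<in>S. k < j} * xs ! j * c (insert j S)) else 0)"

definition pow_seq :: "'a::comm_ring_1 list \<Rightarrow> nat \<Rightarrow> 'a list" where
  "pow_seq xs m = map (\<lambda>x. x ^ m) xs"

definition koszul_map :: "'a::comm_ring_1 list \<Rightarrow> nat \<Rightarrow> nat \<Rightarrow> (nat set \<Rightarrow> 'a) \<Rightarrow> nat set \<Rightarrow> 'a" where
  "koszul_map xs m n c S = (\<Prod>j\<in>S. (xs ! j) ^ (m - n)) * c S"

text \<open>The induced map H_i(x^m) -> H_i(x^n) is zero: every i-cycle maps to a boundary.\<close>
definition koszul_hom_map_zero :: "'a::comm_ring_1 list \<Rightarrow> nat \<Rightarrow> nat \<Rightarrow> nat \<Rightarrow> bool" where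
  "koszul_hom_map_zero xs m n i \<longleftrightarrow>
     (\<forall>c. kchain (length xs) i c \<and> koszul_d (pow_seq xs m) c = (\<lambda>_. 0) \<longrightarrow>
        (\<exists>w. kchain (length xs) (Suc i) w \<and> koszul_d (pow_seq xs n) w = koszul_map xs m n c))"

definition weakly_proregular :: "'a::comm_ring_1 list \<Rightarrow> bool" where
  "weakly_proregular xs \<longleftrightarrow>
     (\<forall>n\<ge>1. \<exists>m\<ge>n. \<forall>i\<ge>1. koszul_hom_map_zero xs m n i)"

text \<open>Elements of R_f are fractions a/f^k; a/f^k = b/f^j in R_f.\<close>
definition loc_eq :: "'a::comm_ring_1 \<Rightarrow> 'a \<Rightarrow> nat \<Rightarrow> 'a \<Rightarrow> nat \<Rightarrow> bool" where
  "loc_eq f a k b j \<longleftrightarrow> (\<exists>N. f ^ N * (a * f ^ j - b * f ^ k) = 0)"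

text \<open>The top term of C(x) is R_{x_1}(x)...(x)R_{x_l} = R_f with f = x_1...x_l, and the
  previous term is the sum over i of R_{g_i}, g_i = prod of x_j for j /= i; the element
  b/g_i^t maps to b x_i^t / f^t. H^l_x(R) = R_f / image. This predicate says that
  a/f^k lies in that image (i.e. is zero in H^l_x(R)).\<close>
definition cech_top_boundary :: "'a::comm_ring_1 list \<Rightarrow> 'a \<Rightarrow> nat \<Rightarrow> bool" where
  "cech_top_boundary xs a k \<longleftrightarrow>
     (\<exists>b t. loc_eq (prod_list xs) a k (\<Sum>i<length xs. b i * (xs ! i) ^ t) t)"

text \<open>H^l_x(R)_p \<noteq> 0: some class of H^l_x(R) is not annihilated by any s outside p.\<close>
definition cech_top_loc_nonzero :: "'a::comm_ring_1 list \<Rightarrow> 'a set \<Rightarrow> bool" where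
  "cech_top_loc_nonzero xs P \<longleftrightarrow>
     (\<exists>a k. \<forall>s. s \<notin> P \<longrightarrow> \<not> cech_top_boundary xs (s * a) k)"

definition parameter_seq :: "'a::comm_ring_1 list \<Rightarrow> bool" where
  "parameter_seq xs \<longleftrightarrow> weakly_proregular xs \<and> ideal_gen xs \<noteq> UNIV \<and>
     (\<forall>P. cr_prime_ideal P \<and> ideal_gen xs \<subseteq> P \<longrightarrow> cech_top_loc_nonzero xs P)"

definition strong_parameter_seq :: "'a::comm_ring_1 list \<Rightarrow> bool" where
  "strong_parameter_seq xs \<longleftrightarrow> (\<forall>i\<in>{1..length xs}. parameter_seq (take i xs))"

definition regular_seq :: "'a::comm_ring_1 list \<Rightarrow> bool" where
  "regular_seq xs \<longleftrightarrow>
     (\<forall>i<length xs. \<forall>r. xs ! i * r \<in> ideal_gen (take i xs) \<longrightarrow> r \<in> ideal_gen (take i xs))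
     \<and> ideal_gen xs \<noteq> UNIV"

definition cohen_macaulay :: "'a::comm_ring_1 itself \<Rightarrow> bool" where
  "cohen_macaulay _ \<longleftrightarrow> (\<forall>xs::'a list. strong_parameter_seq xs \<longrightarrow> regular_seq xs)"

end

theory Submission
  imports Defs
begin

(* Let x_1, ..., x_l be a strong parameter sequence and suppose x = x_(i+1) were a zero divisor
   modulo I = (x_1, ..., x_i). Then x lies in a weakly associated prime of R/I, which by
   unmixedness is a minimal prime P of I. After localizing at P, x is nilpotent modulo every
   ideal (x_1^t, ..., x_i^t), and this forces every class of the top Cech cohomology of
   x_1, ..., x_(i+1) to vanish at P. As (x_1, ..., x_(i+1)) is contained in P, this contradicts
   x_1, ..., x_(i+1) being a parameter sequence. *)

lemma cr_ideal_sum: "cr_ideal I \<Longrightarrow> (\<And>i. i \<in> A \<Longrightarrow> f i \<in> I) \<Longrightarrow> sum f A \<in> I"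
  by (induction A rule: infinite_finite_induct) (auto simp: cr_ideal_def)

lemma cr_ideal_UNIV_iff_one: "cr_ideal I \<Longrightarrow> I = UNIV \<longleftrightarrow> 1 \<in> I"
  unfolding cr_ideal_def by (metis UNIV_I UNIV_eq_I mult.right_neutral)

lemma cr_prime_ideal_power: "cr_prime_ideal P \<Longrightarrow> a ^ Suc n \<in> P \<Longrightarrow> a \<in> P"
  by (induction n) (auto simp: cr_prime_ideal_def)

lemma sum_in_ideal_gen: "(\<Sum>i<length xs. c i * xs ! i) \<in> ideal_gen xs"
  unfolding ideal_gen_def by blast

lemma cr_ideal_ideal_gen: "cr_ideal (ideal_gen xs)"
  unfolding cr_ideal_def
proof (intro conjI ballI allI)
  show "0 \<in> ideal_gen xs"
    unfolding ideal_gen_def by (auto intro: exI[of _ "\<lambda>_. 0"])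
next
  fix y z assume "y \<in> ideal_gen xs" "z \<in> ideal_gen xs"
  then obtain c d where "y = (\<Sum>i<length xs. c i * xs ! i)" "z = (\<Sum>i<length xs. d i * xs ! i)"
    unfolding ideal_gen_def by blast
  then have "y + z = (\<Sum>i<length xs. (c i + d i) * xs ! i)"
    by (simp add: sum.distrib distrib_right)
  then show "y + z \<in> ideal_gen xs" by (simp add: sum_in_ideal_gen)
next
  fix r y assume "y \<in> ideal_gen xs"
  then obtain c where "y = (\<Sum>i<length xs. c i * xs ! i)" unfolding ideal_gen_def by blast
  then have "r * y = (\<Sum>i<length xs. (r * c i) * xs ! i)"
    by (simp add: sum_distrib_left mult.assoc)
  then show "r * y \<in> ideal_gen xs" by (simp add: sum_in_ideal_gen)
qed

lemma set_subset_ideal_gen: "set xs \<subseteq> ideal_gen xs"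
proof
  fix x assume "x \<in> set xs"
  then obtain j where j: "j < length xs" "x = xs ! j" by (auto simp: in_set_conv_nth)
  have "(\<Sum>i<length xs. (if i = j then 1 else 0) * xs ! i) = xs ! j"
    using j by (simp add: sum.delta' of_bool_def[symmetric])
  then show "x \<in> ideal_gen xs" using j sum_in_ideal_gen by metis
qed

lemma ideal_gen_subset_iff:
  assumes "cr_ideal I"
  shows "ideal_gen xs \<subseteq> I \<longleftrightarrow> set xs \<subseteq> I"
proof
  assume "set xs \<subseteq> I"
  then have "c i * xs ! i \<in> I" if "i < length xs" for c i
    using assms that nth_mem[OF that] unfolding cr_ideal_def by blast
  then show "ideal_gen xs \<subseteq> I"
    using assms by (auto simp: ideal_gen_def intro!: cr_ideal_sum)
qed (use set_subset_ideal_gen in blast)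

lemma cr_ideal_Union_chain:
  assumes "C \<noteq> {}" and "subset.chain {I. cr_ideal I} C"
  shows "cr_ideal (\<Union>C)"
  unfolding cr_ideal_def
proof (intro conjI ballI allI)
  have ideals: "\<And>I. I \<in> C \<Longrightarrow> cr_ideal I" and total: "\<And>I K. I \<in> C \<Longrightarrow> K \<in> C \<Longrightarrow> I \<subseteq> K \<or> K \<subseteq> I"
    using assms(2) by (auto simp: subset_chain_def)
  show "0 \<in> \<Union>C" using assms(1) ideals by (auto simp: cr_ideal_def)
  show "r * x \<in> \<Union>C" if "x \<in> \<Union>C" for r x
    using that ideals unfolding cr_ideal_def by blast
  fix x y assume "x \<in> \<Union>C" "y \<in> \<Union>C"
  then obtain I K where "I \<in> C" "K \<in> C" "x \<in> I" "y \<in> K" by blast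
  moreover have "x + y \<in> I \<or> x + y \<in> K"
    using calculation total[of I K] ideals[of I] ideals[of K] unfolding cr_ideal_def by blast
  ultimately show "x + y \<in> \<Union>C" by blast
qed

lemma cr_prime_ideal_Inter_chain:
  assumes "C \<noteq> {}" and "subset.chain {P. cr_prime_ideal P} C"
  shows "cr_prime_ideal (\<Inter>C)"
  unfolding cr_prime_ideal_def
proof (intro conjI allI impI)
  have primes: "\<And>P. P \<in> C \<Longrightarrow> cr_prime_ideal P" and total: "\<And>P Q. P \<in> C \<Longrightarrow> Q \<in> C \<Longrightarrow> P \<subseteq> Q \<or> Q \<subseteq> P"
    using assms(2) by (auto simp: subset_chain_def)
  show "cr_ideal (\<Inter>C)" using primes by (auto simp: cr_prime_ideal_def cr_ideal_def)
  show "\<Inter>C \<noteq> UNIV" using assms(1) primes by (auto simp: cr_prime_ideal_def)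
  fix a b assume ab: "a * b \<in> \<Inter>C"
  show "a \<in> \<Inter>C \<or> b \<in> \<Inter>C"
  proof (rule ccontr)
    assume "\<not> ?thesis"
    then obtain P Q where "P \<in> C" "Q \<in> C" "a \<notin> P" "b \<notin> Q" by blast
    with total[of P Q] have "\<exists>R\<in>C. a \<notin> R \<and> b \<notin> R" by blast
    with ab primes show False by (auto simp: cr_prime_ideal_def)
  qed
qed

lemma cr_ideal_add_multiples:
  assumes I: "cr_ideal I"
  shows "cr_ideal {m + r * a |m r. m \<in> I}" (is "cr_ideal ?X")
  unfolding cr_ideal_def
proof (intro conjI ballI allI)
  have "0 = 0 + 0 * a" "0 \<in> I" using I by (simp_all add: cr_ideal_def)
  then show "0 \<in> ?X" by blast
next
  fix x y assume "x \<in> ?X" "y \<in> ?X"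
  then obtain m r m' r' where "x = m + r * a" "y = m' + r' * a" "m \<in> I" "m' \<in> I" by blast
  moreover have "x + y = (m + m') + (r + r') * a" using calculation by (simp add: algebra_simps)
  moreover have "m + m' \<in> I" using calculation I unfolding cr_ideal_def by blast
  ultimately show "x + y \<in> ?X" by blast
next
  fix s x assume "x \<in> ?X"
  then obtain m r where "x = m + r * a" "m \<in> I" by blast
  moreover have "s * x = s * m + (s * r) * a" using calculation by (simp add: algebra_simps)
  moreover have "s * m \<in> I" using calculation I unfolding cr_ideal_def by blast
  ultimately show "s * x \<in> ?X" by blast
qed

lemma cr_prime_ideal_if_maximal_avoiding:
  assumes M: "cr_ideal M" "M \<inter> S = {}"
    and S: "1 \<in> S" "\<And>a b. a \<in> S \<Longrightarrow> b \<in> S \<Longrightarrow> a * b \<in> S"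
    and maximal: "\<And>X. cr_ideal X \<Longrightarrow> M \<subseteq> X \<Longrightarrow> X \<inter> S = {} \<Longrightarrow> X = M"
  shows "cr_prime_ideal M"
proof -
  have meets_S: "\<exists>m\<in>M. \<exists>r. m + r * a \<in> S" if "a \<notin> M" for a
  proof (rule ccontr)
    define X where "X = {m + r * a |m r. m \<in> M}"
    assume "\<not> (\<exists>m\<in>M. \<exists>r. m + r * a \<in> S)"
    then have "X \<inter> S = {}" unfolding X_def by blast
    moreover have "M \<subseteq> X"
    proof
      fix m assume "m \<in> M"
      moreover have "m = m + 0 * a" by simp
      ultimately show "m \<in> X" unfolding X_def by blast
    qed
    moreover have "cr_ideal X" unfolding X_def by (rule cr_ideal_add_multiples[OF M(1)])
    ultimately have "X = M" by (intro maximal)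
    moreover have "a = 0 + 1 * a" "0 \<in> M" using M(1) by (simp_all add: cr_ideal_def)
    then have "a \<in> X" unfolding X_def by blast
    ultimately show False using \<open>a \<notin> M\<close> by blast
  qed
  show ?thesis
    unfolding cr_prime_ideal_def
  proof (intro conjI allI impI)
    show "cr_ideal M" by (rule M(1))
    show "M \<noteq> UNIV" using M(2) S(1) by blast
    fix a b assume ab: "a * b \<in> M"
    show "a \<in> M \<or> b \<in> M"
    proof (rule ccontr)
      assume "\<not> (a \<in> M \<or> b \<in> M)"
      then obtain m r m' r' where m: "m \<in> M" "m' \<in> M" and S_elems: "m + r * a \<in> S" "m' + r' * b \<in> S"
        using meets_S by blast
      have "(m' + r' * b) * m \<in> M" "(r * a) * m' \<in> M" "(r * r') * (a * b) \<in> M"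
        using M(1) m ab unfolding cr_ideal_def by blast+
      then have "(m' + r' * b) * m + (r * a) * m' + (r * r') * (a * b) \<in> M"
        using M(1) unfolding cr_ideal_def by blast
      moreover have "(m + r * a) * (m' + r' * b) = (m' + r' * b) * m + (r * a) * m' + (r * r') * (a * b)"
        by (simp add: algebra_simps)
      moreover have "(m + r * a) * (m' + r' * b) \<in> S" using S(2) S_elems .
      ultimately show False using M(2) by auto
    qed
  qed
qed

lemma cr_prime_ideal_avoiding:
  assumes J: "cr_ideal J" and S: "1 \<in> S" "\<And>a b. a \<in> S \<Longrightarrow> b \<in> S \<Longrightarrow> a * b \<in> S"
    and JS: "J \<inter> S = {}"
  obtains Q where "cr_prime_ideal Q" "J \<subseteq> Q" "Q \<inter> S = {}"
proof -
  define A where "A = {I. cr_ideal I \<and> J \<subseteq> I \<and> I \<inter> S = {}}"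
  have "\<exists>M\<in>A. \<forall>X\<in>A. M \<subseteq> X \<longrightarrow> X = M"
  proof (rule subset_Zorn_nonempty)
    show "A \<noteq> {}" using J JS by (auto simp: A_def)
    show "\<Union>C \<in> A" if "C \<noteq> {}" "subset.chain A C" for C
    proof -
      have CA: "C \<subseteq> A" using that(2) by (simp add: subset_chain_def)
      have "subset.chain {I. cr_ideal I} C"
        using that(2) by (auto simp: subset_chain_def A_def)
      then have "cr_ideal (\<Union>C)" by (rule cr_ideal_Union_chain[OF that(1)])
      moreover have "J \<subseteq> \<Union>C" "\<Union>C \<inter> S = {}"
        using CA that(1) unfolding A_def by blast+
      ultimately show ?thesis by (simp add: A_def)
    qed
  qed
  then obtain M where "M \<in> A" and maximal: "\<And>X. X \<in> A \<Longrightarrow> M \<subseteq> X \<Longrightarrow> X = M"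
    by blast
  then have M: "cr_ideal M" "J \<subseteq> M" "M \<inter> S = {}" by (simp_all add: A_def)
  have "cr_prime_ideal M"
  proof (rule cr_prime_ideal_if_maximal_avoiding[OF M(1,3) S])
    fix X assume "cr_ideal X" "M \<subseteq> X" "X \<inter> S = {}"
    with M(2) show "X = M" by (intro maximal) (auto simp: A_def)
  qed
  with M that show thesis by blast
qed

lemma minimal_prime_over_exists:
  assumes J: "cr_ideal J" and "1 \<notin> J"
  obtains P where "minimal_prime_over P J"
proof -
  obtain P0 where P0: "cr_prime_ideal P0" "J \<subseteq> P0"
    using cr_prime_ideal_avoiding[OF J, of "{1}"] assms(2) by auto
  define A where "A = uminus ` {P. cr_prime_ideal P \<and> J \<subseteq> P}"
  have "\<exists>M\<in>A. \<forall>X\<in>A. M \<subseteq> X \<longrightarrow> X = M"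
  proof (rule subset_Zorn_nonempty)
    show "A \<noteq> {}" using P0 by (auto simp: A_def)
    show "\<Union>C \<in> A" if "C \<noteq> {}" "subset.chain A C" for C
    proof -
      have "subset.chain {P. cr_prime_ideal P} (uminus ` C)"
        using that(2) by (auto simp: subset_chain_def A_def)
      then have "cr_prime_ideal (\<Inter>(uminus ` C))"
        using that(1) by (intro cr_prime_ideal_Inter_chain) auto
      moreover have "J \<subseteq> \<Inter>(uminus ` C)"
        using that(2) by (auto simp: subset_chain_def A_def)
      moreover have "\<Union>C = - \<Inter>(uminus ` C)" by auto
      ultimately show ?thesis unfolding A_def by blast
    qed
  qed
  then obtain M where "M \<in> A" and maximal: "\<And>X. X \<in> A \<Longrightarrow> M \<subseteq> X \<Longrightarrow> X = M"
    by blast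
  then have "cr_prime_ideal (- M)" "J \<subseteq> - M" by (auto simp: A_def)
  moreover have "Q = - M" if "cr_prime_ideal Q" "J \<subseteq> Q" "Q \<subseteq> - M" for Q
  proof -
    have "- Q \<in> A" using that by (auto simp: A_def)
    then have "- Q = M" using that(3) by (intro maximal) auto
    then show ?thesis by auto
  qed
  ultimately show thesis using that unfolding minimal_prime_over_def by blast
qed

lemma minimal_prime_over_power_multiple:
  assumes P: "minimal_prime_over P J" and J: "cr_ideal J" and "x \<in> P"
  obtains u n where "u \<notin> P" "u * x ^ n \<in> J"
proof (rule ccontr)
  assume no_multiple: "\<not> thesis"
  have prime: "cr_prime_ideal P" using P by (simp add: minimal_prime_over_def)
  define S where "S = {u * x ^ n |u n. u \<notin> P}"
  have "1 \<notin> P" using prime cr_ideal_UNIV_iff_one by (auto simp: cr_prime_ideal_def)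
  moreover have "(1::'a) = 1 * x ^ 0" by simp
  ultimately have "1 \<in> S" unfolding S_def by blast
  moreover have "a * b \<in> S" if ab: "a \<in> S" "b \<in> S" for a b
  proof -
    obtain u n v m where "u \<notin> P" "v \<notin> P" "a = u * x ^ n" "b = v * x ^ m"
      using ab unfolding S_def by blast
    moreover have "u * v \<notin> P" using prime calculation unfolding cr_prime_ideal_def by blast
    moreover have "a * b = (u * v) * x ^ (n + m)"
      using calculation by (simp add: algebra_simps power_add)
    ultimately show ?thesis unfolding S_def by blast
  qed
  moreover have "J \<inter> S = {}" using no_multiple that unfolding S_def by blast
  ultimately obtain Q where Q: "cr_prime_ideal Q" "J \<subseteq> Q" "Q \<inter> S = {}"
    using cr_prime_ideal_avoiding[OF J] by metis
  have "Q \<subseteq> P"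
  proof
    fix q assume "q \<in> Q"
    have "q = q * x ^ 0" by simp
    then show "q \<in> P" using \<open>q \<in> Q\<close> Q(3) unfolding S_def by blast
  qed
  then have "Q = P" using P Q unfolding minimal_prime_over_def by blast
  moreover have "x = 1 * x ^ 1" by simp
  then have "x \<in> S" using \<open>1 \<notin> P\<close> unfolding S_def by blast
  ultimately show False using Q(3) \<open>x \<in> P\<close> by blast
qed

lemma minimal_prime_over_ideal_gen_pow_seq:
  assumes "minimal_prime_over P (ideal_gen ys)"
  shows "minimal_prime_over P (ideal_gen (pow_seq ys (Suc k)))"
proof -
  have same_primes: "ideal_gen (pow_seq ys (Suc k)) \<subseteq> Q \<longleftrightarrow> ideal_gen ys \<subseteq> Q"
    if "cr_prime_ideal Q" for Q
  proof -
    have Q: "cr_ideal Q" using that by (simp add: cr_prime_ideal_def)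
    have "y ^ Suc k \<in> Q \<longleftrightarrow> y \<in> Q" for y
    proof
      assume "y \<in> Q"
      then have "y ^ k * y \<in> Q" using Q unfolding cr_ideal_def by blast
      then show "y ^ Suc k \<in> Q" by (simp add: mult.commute)
    qed (rule cr_prime_ideal_power[OF that])
    then have "set (pow_seq ys (Suc k)) \<subseteq> Q \<longleftrightarrow> set ys \<subseteq> Q" by (auto simp: pow_seq_def)
    then show ?thesis by (simp add: ideal_gen_subset_iff[OF Q])
  qed
  have P: "cr_prime_ideal P" "ideal_gen ys \<subseteq> P"
    and minimal: "\<And>Q. cr_prime_ideal Q \<Longrightarrow> ideal_gen ys \<subseteq> Q \<Longrightarrow> Q \<subseteq> P \<Longrightarrow> Q = P"
    using assms unfolding minimal_prime_over_def by blast+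
  show ?thesis
    unfolding minimal_prime_over_def
  proof (intro conjI allI impI)
    show "ideal_gen (pow_seq ys (Suc k)) \<subseteq> P" using P same_primes by blast
    fix Q assume "cr_prime_ideal Q \<and> ideal_gen (pow_seq ys (Suc k)) \<subseteq> Q \<and> Q \<subseteq> P"
    then show "Q = P" using minimal same_primes by blast
  qed (rule P(1))
qed

lemma Supp_quot_eq:
  assumes "cr_ideal I"
  shows "Supp_quot I = {P. cr_prime_ideal P \<and> I \<subseteq> P}"
proof (intro set_eqI iffI)
  fix P assume "P \<in> Supp_quot I"
  then obtain z where P: "cr_prime_ideal P" and z: "\<And>s. s \<notin> P \<Longrightarrow> s * z \<notin> I"
    unfolding Supp_quot_def by blast
  have "a \<in> P" if "a \<in> I" for a
  proof (rule ccontr)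
    assume "a \<notin> P"
    moreover have "z * a \<in> I" using assms that unfolding cr_ideal_def by blast
    ultimately show False using z by (simp add: mult.commute)
  qed
  with P show "P \<in> {P. cr_prime_ideal P \<and> I \<subseteq> P}" by blast
next
  fix P assume "P \<in> {P. cr_prime_ideal P \<and> I \<subseteq> P}"
  then have "cr_prime_ideal P" "\<forall>s. s \<notin> P \<longrightarrow> s * 1 \<notin> I" by auto
  then show "P \<in> Supp_quot I" unfolding Supp_quot_def by blast
qed

lemma Min_quot_eq: "cr_ideal I \<Longrightarrow> Min_quot I = {P. minimal_prime_over P I}"
  by (auto simp: Min_quot_def Supp_quot_eq minimal_prime_over_def)

lemma cr_ideal_ann_quot:
  assumes I: "cr_ideal I"
  shows "cr_ideal (ann_quot I z)"
  unfolding cr_ideal_def ann_quot_def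
proof (intro conjI ballI allI CollectI)
  show "0 * z \<in> I" using I by (simp add: cr_ideal_def)
  fix a b assume "a \<in> {r. r * z \<in> I}" "b \<in> {r. r * z \<in> I}"
  then have "a * z + b * z \<in> I" using I unfolding cr_ideal_def by blast
  then show "(a + b) * z \<in> I" by (simp add: distrib_right)
next
  fix s a assume "a \<in> {r. r * z \<in> I}"
  then have "s * (a * z) \<in> I" using I unfolding cr_ideal_def by blast
  then show "(s * a) * z \<in> I" by (simp add: mult.assoc)
qed

lemma unmixed_zero_divisor_in_minimal_prime:
  assumes I: "cr_ideal I" and "unmixed I" and "x * r \<in> I" and "r \<notin> I"
  obtains P where "minimal_prime_over P I" "x \<in> P"
proof -
  have "1 \<notin> ann_quot I r" using \<open>r \<notin> I\<close> by (simp add: ann_quot_def)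
  then obtain P where P: "minimal_prime_over P (ann_quot I r)"
    using minimal_prime_over_exists[OF cr_ideal_ann_quot[OF I]] by blast
  then have "P \<in> Min_quot I"
    using \<open>unmixed I\<close> unfolding unmixed_def wAss_quot_def by blast
  moreover have "x \<in> P"
    using P \<open>x * r \<in> I\<close> unfolding minimal_prime_over_def ann_quot_def by blast
  ultimately show thesis using that Min_quot_eq[OF I] by blast
qed

lemma prod_list_eq_prod_nth: "prod_list xs = (\<Prod>i<length xs. xs ! i)"
  by (induction xs) (simp_all add: prod.lessThan_Suc_shift del: prod.lessThan_Suc)

lemma cech_top_boundary_append:
  fixes ys :: "'a::comm_ring_1 list"
  assumes "u * x ^ n \<in> ideal_gen (pow_seq ys (Suc k))"
  shows "cech_top_boundary (ys @ [x]) (u * a) k"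
proof -
  define l where "l = length ys"
  obtain c where c: "u * x ^ n = (\<Sum>j<l. c j * ys ! j ^ Suc k)"
    using assms unfolding ideal_gen_def l_def by (auto simp: pow_seq_def)
  define Y where "Y = (\<Prod>j<l. ys ! j)"
  define cofactor where "cofactor j = (\<Prod>m\<in>{..<l} - {j}. ys ! m)" for j
  (* With f = Y x, the fraction u a / f^k equals a Y^n (u x^n) / f^(k+n), and
     Y^n y_j^(k+1) = (y_j cofactor_j^n) y_j^(k+n) turns its numerator into a combination
     of the y_j^(k+n). *)
  define b where "b j = (if j < l then a * c j * ys ! j * cofactor j ^ n else 0)" for j
  have f: "prod_list (ys @ [x]) = Y * x"
    unfolding Y_def l_def by (simp add: prod_list_eq_prod_nth[of ys])
  have Y_split: "Y = ys ! j * cofactor j" if "j < l" for j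
    unfolding Y_def cofactor_def using that by (simp add: prod.remove)
  have "(\<Sum>j<length (ys @ [x]). b j * (ys @ [x]) ! j ^ (k + n))
      = (\<Sum>j<l. a * c j * ys ! j * cofactor j ^ n * ys ! j ^ (k + n))"
    by (simp add: l_def[symmetric] b_def nth_append)
  also have "\<dots> = (\<Sum>j<l. a * Y ^ n * (c j * ys ! j ^ Suc k))"
  proof (rule sum.cong)
    fix j assume "j \<in> {..<l}"
    then have "Y ^ n = ys ! j ^ n * cofactor j ^ n" using Y_split by (simp add: power_mult_distrib)
    then show "a * c j * ys ! j * cofactor j ^ n * ys ! j ^ (k + n) = a * Y ^ n * (c j * ys ! j ^ Suc k)"
      by (simp add: power_add algebra_simps)
  qed simp
  also have "\<dots> = a * Y ^ n * (u * x ^ n)" by (simp add: c sum_distrib_left)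
  finally have "prod_list (ys @ [x]) ^ 0 * (u * a * prod_list (ys @ [x]) ^ (k + n) -
      (\<Sum>j<length (ys @ [x]). b j * (ys @ [x]) ! j ^ (k + n)) * prod_list (ys @ [x]) ^ k) = 0"
    unfolding f by (simp add: power_add power_mult_distrib algebra_simps)
  then show ?thesis unfolding cech_top_boundary_def loc_eq_def by blast
qed

lemma not_cech_top_loc_nonzero_append:
  assumes P: "minimal_prime_over P (ideal_gen ys)" and "x \<in> P"
  shows "\<not> cech_top_loc_nonzero (ys @ [x]) P"
proof -
  have "\<exists>s. s \<notin> P \<and> cech_top_boundary (ys @ [x]) (s * a) k" for a k
  proof -
    obtain u n where "u \<notin> P" "u * x ^ n \<in> ideal_gen (pow_seq ys (Suc k))"
      using minimal_prime_over_power_multiple[OF minimal_prime_over_ideal_gen_pow_seq[OF P]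
          cr_ideal_ideal_gen \<open>x \<in> P\<close>] .
    then show ?thesis using cech_top_boundary_append by blast
  qed
  then show ?thesis unfolding cech_top_loc_nonzero_def by blast
qed

lemma parameter_seq_append_not_in_minimal_prime:
  assumes "parameter_seq (ys @ [x])" and P: "minimal_prime_over P (ideal_gen ys)"
  shows "x \<notin> P"
proof
  assume "x \<in> P"
  have prime: "cr_prime_ideal P" and "ideal_gen ys \<subseteq> P"
    using P unfolding minimal_prime_over_def by blast+
  have "cr_ideal P" using prime by (simp add: cr_prime_ideal_def)
  then have "ideal_gen (ys @ [x]) \<subseteq> P"
    unfolding ideal_gen_subset_iff[OF \<open>cr_ideal P\<close>]
    using \<open>ideal_gen ys \<subseteq> P\<close> set_subset_ideal_gen[of ys] \<open>x \<in> P\<close> by auto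
  then have "cech_top_loc_nonzero (ys @ [x]) P"
    using assms(1) prime unfolding parameter_seq_def by blast
  with not_cech_top_loc_nonzero_append[OF P \<open>x \<in> P\<close>] show False by contradiction
qed

lemma strong_parameter_seq_take:
  "strong_parameter_seq xs \<Longrightarrow> strong_parameter_seq (take i xs)"
  unfolding strong_parameter_seq_def by (auto simp: min_def)

lemma strong_parameter_seq_take_Suc:
  "strong_parameter_seq xs \<Longrightarrow> i < length xs \<Longrightarrow> parameter_seq (take (Suc i) xs)"
  unfolding strong_parameter_seq_def by auto

lemma strong_parameter_seq_ideal_gen_neq_UNIV:
  assumes "(0::'a::comm_ring_1) \<noteq> 1" and "strong_parameter_seq (xs :: 'a list)"
  shows "ideal_gen xs \<noteq> UNIV"
proof (cases xs rule: rev_cases)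
  case Nil
  then have "ideal_gen xs = {0}" by (simp add: ideal_gen_def)
  with assms(1) show ?thesis by (metis UNIV_I singletonD)
next
  case (snoc ys y)
  then have "parameter_seq xs"
    using strong_parameter_seq_take_Suc[OF assms(2), of "length ys"] by simp
  then show ?thesis unfolding parameter_seq_def by blast
qed

lemma regular_seq_if_prefixes_unmixed:
  fixes xs :: "'a::comm_ring_1 list"
  assumes "(0::'a) \<noteq> 1" and strong: "strong_parameter_seq xs"
    and unmixed: "\<And>i. i < length xs \<Longrightarrow> unmixed (ideal_gen (take i xs))"
  shows "regular_seq xs"
  unfolding regular_seq_def
proof (intro conjI allI impI)
  show "ideal_gen xs \<noteq> UNIV" using assms(1) strong by (rule strong_parameter_seq_ideal_gen_neq_UNIV)
  fix i r assume i: "i < length xs" and "xs ! i * r \<in> ideal_gen (take i xs)"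
  show "r \<in> ideal_gen (take i xs)"
  proof (rule ccontr)
    assume "r \<notin> ideal_gen (take i xs)"
    then obtain P where P: "minimal_prime_over P (ideal_gen (take i xs))" and "xs ! i \<in> P"
      using unmixed_zero_divisor_in_minimal_prime[OF cr_ideal_ideal_gen unmixed[OF i]]
        \<open>xs ! i * r \<in> ideal_gen (take i xs)\<close> by blast
    moreover have "parameter_seq (take i xs @ [xs ! i])"
      using strong_parameter_seq_take_Suc[OF strong i] i by (simp add: take_Suc_conv_app_nth)
    ultimately show False using parameter_seq_append_not_in_minimal_prime by blast
  qed
qed

theorem proposition4p10:
  assumes "(0::'a::comm_ring_1) \<noteq> 1"
    and "\<forall>xs::'a list. strong_parameter_seq xs \<longrightarrow> unmixed (ideal_gen xs)"
  shows "cohen_macaulay TYPE('a)"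
  unfolding cohen_macaulay_def
proof (intro allI impI)
  fix xs :: "'a list" assume "strong_parameter_seq xs"
  then show "regular_seq xs"
    using assms strong_parameter_seq_take by (blast intro: regular_seq_if_prefixes_unmixed)
qed

end
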